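(* Let $A\ge0$, let $c:S^1_L\to\mathbb R^2$ be an arclength-parametrized immersion with curvature $\kappa$, and consider on $U=\{f\in C^\infty(S^1_L,\mathbb R):\|f\|_\infty<\varepsilon\}$ (for small $\varepsilon>0$) the metric $$G_f(h,k)=\int_{S^1_L}(1+A\kappa_{\psi(f)}^2)\,\frac{hk\,(1-f\kappa)^2}{\sqrt{(1-f\kappa)^2+f'^2}}\,d\theta,\qquad \psi(f)=c+f\,ic'.$$ Define $\Gamma_f$ by $2G_f(\Gamma_f(h,k),l)=dG(f)(l)(h,k)-dG(f)(h)(k,l)-dG(f)(k)(l,h)$ and $$R_f(m,h,m,h)=-d^2G(f)(m,h)(h,m)+\tfrac12d^2G(f)(m,m)(h,h)+\tfrac12d^2G(f)(h,h)(m,m)-G_f(\Gamma_f(h,m),\Gamma_f(m,h))+G_f(\Gamma_f(m,m),\Gamma_f(h,h)),$$ where $dG(f)(l)(h,k)$ and $d^2G(f)(m,l)(h,k)$ denote the first and second derivatives of $f\mapsto G_f(h,k)$ in the directions $l$ and $m,l$. Then at $f=0$: $$\Gamma_0(h,k)=\frac{(\tfrac12\kappa-\tfrac12A\kappa^3+A\kappa'')hk+2A\kappa'(h'k+hk')+2A\kappa h'k'}{1+A\kappa^2},$$ and, with $W=mh'-m'h$, $$R_0(m,h,m,h)=\int_{S^1_L}\frac{-(A\kappa^2-1)^2+4A^2\kappa\kappa''-8A^2\kappa'^2}{2(1+A\kappa^2)}\,W^2\,d\theta+\int_{S^1_L}A\,W'^2\,d\theta.$$ In particular, for $A=0$, $\Gamma_0(h,k)=\tfrac12\kappa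 hk$ and $R_0(m,h,m,h)=-\tfrac12\int_{S^1_L}W^2\,d\theta\le0$, so the sectional curvature $k_0(P(m,h))=-R_0(m,h,m,h)/(G_0(m,m)G_0(h,h)-G_0(m,h)^2)$ is non-negative.
   Context: $S^1_L=\mathbb R/L\mathbb Z$, with $\theta$ the arclength parameter of $c$, so $|c'|\equiv1$; $\mathbb R^2\cong\mathbb C$; primes denote $d/d\theta$. For an immersion $e$, $\kappa_e=\det(e',e'')/|e'|^3$; $\kappa=\kappa_c$. The map $f\mapsto\pi(\psi(f))$ is a chart of the space of unparametrized curves near $\pi(c)$, and $G_f$ is the pullback of the metric $G^A(h,k)=\int(1+A\kappa^2)\langle h,k\rangle|c_\theta|d\theta$ restricted to normal vectors. $h,k,l,m\in C^\infty(S^1_L,\mathbb R)$. *)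

theory Defs
  imports "HOL-Analysis.Analysis"
begin

definition vderiv :: "(real \<Rightarrow> complex) \<Rightarrow> real \<Rightarrow> complex" where
  "vderiv e = (\<lambda>t. vector_derivative e (at t))"

definition smooth_fun :: "(real \<Rightarrow> real) \<Rightarrow> bool" where
  "smooth_fun f \<longleftrightarrow> (\<forall>n t. ((deriv ^^ n) f) differentiable (at t))"

definition smooth_curve :: "(real \<Rightarrow> complex) \<Rightarrow> bool" where
  "smooth_curve e \<longleftrightarrow> (\<forall>n t. ((vderiv ^^ n) e) differentiable (at t))"

text \<open>Functions on S^1_L = R / L Z are L-periodic functions on R.\<close>
definition L_periodic :: "real \<Rightarrow> (real \<Rightarrow> 'b) \<Rightarrow> bool" where
  "L_periodic L f \<longleftrightarrow> (\<forall>x. f (x + L) = f x)"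

definition Cinf :: "real \<Rightarrow> (real \<Rightarrow> real) set" where
  "Cinf L = {f. smooth_fun f \<and> L_periodic L f}"

text \<open>Curvature of an immersion: det(e',e'') / |e'|^3, with det(z,w) = Im(conj z * w).\<close>
definition curv :: "(real \<Rightarrow> complex) \<Rightarrow> real \<Rightarrow> real" where
  "curv e t = Im (cnj (vderiv e t) * vderiv (vderiv e) t) / (cmod (vderiv e t)) ^ 3"

definition psi :: "(real \<Rightarrow> complex) \<Rightarrow> (real \<Rightarrow> real) \<Rightarrow> real \<Rightarrow> complex" where
  "psi c f = (\<lambda>t. c t + complex_of_real (f t) * \<i> * vderiv c t)"

definition Gm :: "(real \<Rightarrow> complex) \<Rightarrow> real \<Rightarrow> real \<Rightarrow> (real \<Rightarrow> real) \<Rightarrow> (real \<Rightarrow> real) \<Rightarrow> (real \<Rightarrow> real) \<Rightarrow> real" where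
  "Gm c A L f h k = integral {0..L} (\<lambda>t.
      (1 + A * (curv (psi c f) t)\<^sup>2) * h t * k t * (1 - f t * curv c t)\<^sup>2
        / sqrt ((1 - f t * curv c t)\<^sup>2 + (deriv f t)\<^sup>2))"

definition dG :: "(real \<Rightarrow> complex) \<Rightarrow> real \<Rightarrow> real \<Rightarrow> (real \<Rightarrow> real) \<Rightarrow> (real \<Rightarrow> real) \<Rightarrow> (real \<Rightarrow> real) \<Rightarrow> (real \<Rightarrow> real) \<Rightarrow> real" where
  "dG c A L f l h k = deriv (\<lambda>s. Gm c A L (\<lambda>t. f t + s * l t) h k) 0"

definition d2G :: "(real \<Rightarrow> complex) \<Rightarrow> real \<Rightarrow> real \<Rightarrow> (real \<Rightarrow> real) \<Rightarrow> (real \<Rightarrow> real) \<Rightarrow> (real \<Rightarrow> real) \<Rightarrow> (real \<Rightarrow> real) \<Rightarrow> (real \<Rightarrow> real) \<Rightarrow> real" where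
  "d2G c A L f m l h k =
     deriv (\<lambda>r. deriv (\<lambda>s. Gm c A L (\<lambda>t. f t + r * m t + s * l t) h k) 0) 0"

definition Chr :: "(real \<Rightarrow> complex) \<Rightarrow> real \<Rightarrow> real \<Rightarrow> (real \<Rightarrow> real) \<Rightarrow> (real \<Rightarrow> real) \<Rightarrow> (real \<Rightarrow> real) \<Rightarrow> (real \<Rightarrow> real)" where
  "Chr c A L f h k = (THE g. g \<in> Cinf L \<and>
     (\<forall>l\<in>Cinf L. 2 * Gm c A L f g l = dG c A L f l h k - dG c A L f h k l - dG c A L f k l h))"

definition Rm :: "(real \<Rightarrow> complex) \<Rightarrow> real \<Rightarrow> real \<Rightarrow> (real \<Rightarrow> real) \<Rightarrow> (real \<Rightarrow> real) \<Rightarrow> (real \<Rightarrow> real) \<Rightarrow> real" where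
  "Rm c A L f m h =
     - d2G c A L f m h h m + 1/2 * d2G c A L f m m h h + 1/2 * d2G c A L f h h m m
     - Gm c A L f (Chr c A L f h m) (Chr c A L f m h)
     + Gm c A L f (Chr c A L f m m) (Chr c A L f h h)"

definition seccurv :: "(real \<Rightarrow> complex) \<Rightarrow> real \<Rightarrow> real \<Rightarrow> (real \<Rightarrow> real) \<Rightarrow> (real \<Rightarrow> real) \<Rightarrow> (real \<Rightarrow> real) \<Rightarrow> real" where
  "seccurv c A L f m h =
     - Rm c A L f m h / (Gm c A L f m m * Gm c A L f h h - (Gm c A L f m h)\<^sup>2)"

end

theory Submission
  imports Defs
begin

text \<open>In the chart \<open>\<psi>(f) = c + f i c'\<close> one has \<open>\<psi>(f)' = c' ((1 - f \<kappa>) + i f')\<close>, so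
  \<open>G\<^sub>f(h,k) = \<integral> h k D(f, f', f'')\<close> for an explicit algebraic density \<open>D\<close> whose only other
  dependence on \<open>\<theta>\<close> is through \<open>\<kappa>, \<kappa>'\<close>. Differentiating under the integral sign, \<open>dG(0)\<close> and
  \<open>d\<^sup>2G(0)\<close> are integrals of the first and second derivatives of \<open>D\<close> at the zero jet.
  Integrating by parts twice moves every derivative off the test direction \<open>l\<close> in the Koszul
  formula, which yields \<open>\<Gamma>\<^sub>0\<close> pointwise; it is unique because \<open>G\<^sub>0\<close> is positive definite.
  The integrand of \<open>R\<^sub>0(m,h,m,h)\<close> then collapses, by the Gram-determinant identity for the symmetric
  bilinear form defining \<open>\<Gamma>\<^sub>0\<close>, to a multiple of \<open>W\<^sup>2\<close> plus \<open>A W'\<^sup>2\<close>. For \<open>A = 0\<close> the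
  Cauchy-Schwarz inequality makes the denominator of the sectional curvature nonnegative.\<close>

section \<open>Smooth functions\<close>

lemma smooth_fun_coinduct:
  assumes "f \<in> F"
    and step: "\<And>g. g \<in> F \<Longrightarrow> (\<forall>t. g differentiable (at t)) \<and> deriv g \<in> F"
  shows "smooth_fun f"
proof -
  have "(deriv ^^ n) f \<in> F" for n
    by (induction n) (use assms in auto)
  then show ?thesis
    unfolding smooth_fun_def using step by blast
qed

lemma smooth_fun_differentiable: "smooth_fun f \<Longrightarrow> f differentiable (at t)"
  unfolding smooth_fun_def by (metis funpow_0)

lemma smooth_fun_deriv: "smooth_fun f \<Longrightarrow> smooth_fun (deriv f)"
  unfolding smooth_fun_def by (metis funpow_Suc_right comp_apply)

lemma smooth_fun_DERIV: "smooth_fun f \<Longrightarrow> (f has_real_derivative deriv f t) (at t)"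
  using smooth_fun_differentiable DERIV_deriv_iff_real_differentiable by blast

lemma smooth_fun_const [intro]: "smooth_fun (\<lambda>_. c)"
  by (rule smooth_fun_coinduct[where F = "range (\<lambda>c _. c)"]) auto

text \<open>The algebra generated by the smooth functions and the inverses of its nonvanishing elements is
  closed under \<open>deriv\<close>, so by coinduction it consists of smooth functions.\<close>

inductive_set smooth_algebra :: "(real \<Rightarrow> real) set" where
  smooth: "smooth_fun f \<Longrightarrow> f \<in> smooth_algebra"
| add: "f \<in> smooth_algebra \<Longrightarrow> g \<in> smooth_algebra \<Longrightarrow> (\<lambda>t. f t + g t) \<in> smooth_algebra"
| mult: "f \<in> smooth_algebra \<Longrightarrow> g \<in> smooth_algebra \<Longrightarrow> (\<lambda>t. f t * g t) \<in> smooth_algebra"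
| inverse: "f \<in> smooth_algebra \<Longrightarrow> \<forall>t. f t \<noteq> 0 \<Longrightarrow> (\<lambda>t. inverse (f t)) \<in> smooth_algebra"

lemma smooth_algebra_deriv:
  assumes "f \<in> smooth_algebra"
  shows "(\<forall>t. f differentiable (at t)) \<and> deriv f \<in> smooth_algebra"
  using assms
proof induction
  case (smooth f)
  then show ?case
    using smooth_fun_differentiable smooth_fun_deriv smooth_algebra.smooth by blast
next
  case (add f g)
  have "deriv (\<lambda>t. f t + g t) = (\<lambda>t. deriv f t + deriv g t)"
    using add by (intro ext DERIV_imp_deriv DERIV_add) (auto simp: DERIV_deriv_iff_real_differentiable)
  then show ?case
    using add by (auto intro: smooth_algebra.add)
next
  case (mult f g)
  have "deriv (\<lambda>t. f t * g t) = (\<lambda>t. deriv f t * g t + f t * deriv g t)"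
    using mult by (intro ext DERIV_imp_deriv)
      (auto intro!: derivative_eq_intros simp: DERIV_deriv_iff_real_differentiable[symmetric])
  then show ?case
    using mult by (auto intro: smooth_algebra.add smooth_algebra.mult)
next
  case (inverse f)
  have "deriv (\<lambda>t. inverse (f t)) = (\<lambda>t. - 1 * (deriv f t * (inverse (f t) * inverse (f t))))"
    using inverse
    by (intro ext DERIV_imp_deriv) (auto intro!: derivative_eq_intros simp: DERIV_deriv_iff_real_differentiable)
  moreover have "(\<lambda>t. - 1 * (deriv f t * (inverse (f t) * inverse (f t)))) \<in> smooth_algebra"
    using inverse
    by (intro smooth_algebra.mult[OF smooth_algebra.smooth[OF smooth_fun_const]] smooth_algebra.mult
        smooth_algebra.inverse) auto
  ultimately show ?case
    using inverse by auto
qed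

lemma smooth_algebra_eq: "smooth_algebra = {f. smooth_fun f}"
  using smooth_algebra.smooth smooth_algebra_deriv
  by (auto intro: smooth_fun_coinduct[where F = smooth_algebra])

lemma smooth_fun_add [intro]: "smooth_fun f \<Longrightarrow> smooth_fun g \<Longrightarrow> smooth_fun (\<lambda>t. f t + g t)"
  and smooth_fun_mult [intro]: "smooth_fun f \<Longrightarrow> smooth_fun g \<Longrightarrow> smooth_fun (\<lambda>t. f t * g t)"
  and smooth_fun_inverse: "smooth_fun f \<Longrightarrow> \<forall>t. f t \<noteq> 0 \<Longrightarrow> smooth_fun (\<lambda>t. inverse (f t))"
  using smooth_algebra.intros by (auto simp: smooth_algebra_eq)

lemma smooth_fun_minus [intro]: "smooth_fun f \<Longrightarrow> smooth_fun (\<lambda>t. - f t)"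
  using smooth_fun_mult[of "\<lambda>_. -1" f] by auto

lemma smooth_fun_diff [intro]: "smooth_fun f \<Longrightarrow> smooth_fun g \<Longrightarrow> smooth_fun (\<lambda>t. f t - g t)"
  using smooth_fun_add[of f "\<lambda>t. - g t"] by auto

lemma smooth_fun_divide [intro]:
  "smooth_fun f \<Longrightarrow> smooth_fun g \<Longrightarrow> \<forall>t. g t \<noteq> 0 \<Longrightarrow> smooth_fun (\<lambda>t. f t / g t)"
  using smooth_fun_mult[OF _ smooth_fun_inverse, of f g] by (simp add: divide_inverse)

lemma smooth_fun_power [intro]: "smooth_fun f \<Longrightarrow> smooth_fun (\<lambda>t. f t ^ n)"
  by (induction n) auto

lemma smooth_fun_continuous_on: "smooth_fun f \<Longrightarrow> continuous_on S f"
  by (meson continuous_at_imp_continuous_on differentiable_imp_continuous_within smooth_fun_differentiable)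

lemma smooth_fun_integrable: "smooth_fun f \<Longrightarrow> f integrable_on {a..b}"
  by (simp add: integrable_continuous_interval smooth_fun_continuous_on)

lemma smooth_fun_has_integral: "smooth_fun f \<Longrightarrow> (f has_integral integral {a..b} f) {a..b}"
  using smooth_fun_integrable by blast

lemma smooth_curve_differentiable: "smooth_curve e \<Longrightarrow> e differentiable (at t)"
  unfolding smooth_curve_def by (metis funpow_0)

lemma smooth_curve_vderiv: "smooth_curve e \<Longrightarrow> smooth_curve (vderiv e)"
  unfolding smooth_curve_def by (metis funpow_Suc_right comp_apply)

lemma smooth_curve_has_vderiv: "smooth_curve e \<Longrightarrow> (e has_vector_derivative vderiv e t) (at t)"
  unfolding vderiv_def using smooth_curve_differentiable vector_derivative_works by blast

lemma smooth_fun_Re_Im: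
  assumes "smooth_curve e"
  shows "smooth_fun (\<lambda>t. Re (e t))" and "smooth_fun (\<lambda>t. Im (e t))"
proof -
  let ?F = "{(\<lambda>t. Re (e t)) | e. smooth_curve e} \<union> {(\<lambda>t. Im (e t)) | e. smooth_curve e}"
  have parts: "((\<lambda>t. Re (e t)) has_real_derivative Re (vderiv e t)) (at t)"
    "((\<lambda>t. Im (e t)) has_real_derivative Im (vderiv e t)) (at t)" if "smooth_curve e" for e t
    using smooth_curve_has_vderiv[OF that] has_vector_derivative_complex_iff by blast+
  have "(\<forall>t. g differentiable (at t)) \<and> deriv g \<in> ?F" if "g \<in> ?F" for g
    using that
  proof (elim UnE CollectE exE conjE)
    fix e assume g: "g = (\<lambda>t. Re (e t))" and e: "smooth_curve e"
    then have "deriv g = (\<lambda>t. Re (vderiv e t))"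
      using parts(1) by (auto intro!: DERIV_imp_deriv)
    then show ?thesis
      using g parts(1)[OF e] smooth_curve_vderiv[OF e] by (auto simp: real_differentiable_def)
  next
    fix e assume g: "g = (\<lambda>t. Im (e t))" and e: "smooth_curve e"
    then have "deriv g = (\<lambda>t. Im (vderiv e t))"
      using parts(2) by (auto intro!: DERIV_imp_deriv)
    then show ?thesis
      using g parts(2)[OF e] smooth_curve_vderiv[OF e] by (auto simp: real_differentiable_def)
  qed
  then show "smooth_fun (\<lambda>t. Re (e t))" "smooth_fun (\<lambda>t. Im (e t))"
    using assms by (auto intro!: smooth_fun_coinduct[where F = ?F])
qed

lemma deriv_line:
  assumes "smooth_fun f" "smooth_fun l"
  shows "deriv (\<lambda>t. f t + s * l t) = (\<lambda>t. deriv f t + s * deriv l t)"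
  by (rule ext, rule DERIV_imp_deriv) (auto intro!: derivative_eq_intros smooth_fun_DERIV assms)

lemma deriv_wronskian:
  assumes "smooth_fun m" "smooth_fun h"
  shows "deriv (\<lambda>t. m t * deriv h t - deriv m t * h t) = (\<lambda>t. m t * deriv (deriv h) t - deriv (deriv m) t * h t)"
  by (rule ext, rule DERIV_imp_deriv)
    (rule derivative_eq_intros smooth_fun_DERIV smooth_fun_deriv assms refl | simp add: algebra_simps)+

section \<open>Periodic functions\<close>

lemma L_periodic_deriv:
  assumes "smooth_fun f" "L_periodic L f"
  shows "L_periodic L (deriv f)"
  unfolding L_periodic_def
proof
  fix t
  have "(f has_real_derivative deriv f (t + L)) (at (t + L))"
    using smooth_fun_DERIV[OF assms(1)] .
  then have "((\<lambda>x. f (x + L)) has_real_derivative deriv f (t + L)) (at t)"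
    by (simp add: DERIV_shift)
  moreover have "(\<lambda>x. f (x + L)) = f"
    using assms(2) by (auto simp: L_periodic_def)
  ultimately show "deriv f (t + L) = deriv f t"
    using DERIV_imp_deriv by metis
qed

lemma L_periodic_vderiv:
  assumes "smooth_curve e" "L_periodic L e"
  shows "L_periodic L (vderiv e)"
  unfolding L_periodic_def
proof
  fix t
  have "((\<lambda>x. x + L) has_vector_derivative 1) (at t)"
    by (auto intro!: derivative_eq_intros)
  from vector_diff_chain_at[OF this smooth_curve_has_vderiv[OF assms(1), of "t + L"]]
  have "((e \<circ> (\<lambda>x. x + L)) has_vector_derivative vderiv e (t + L)) (at t)"
    by simp
  moreover have "e \<circ> (\<lambda>x. x + L) = e"
    using assms(2) by (auto simp: L_periodic_def)
  ultimately show "vderiv e (t + L) = vderiv e t"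
    unfolding vderiv_def using vector_derivative_at by metis
qed

lemma L_periodic_int: "L_periodic L f \<Longrightarrow> f (x + of_int n * L) = f x"
proof (induction n rule: int_induct[where k = 0])
  case (step1 n)
  then show ?case
    unfolding L_periodic_def by (metis add.assoc distrib_right mult_1 of_int_add of_int_1)
next
  case (step2 n)
  then show ?case
    unfolding L_periodic_def by (metis add.assoc diff_add_cancel distrib_right mult_1 of_int_1 of_int_add)
qed simp

lemma L_periodic_zero:
  assumes "L_periodic L f" "L > 0" "\<forall>t\<in>{0..L}. f t = 0"
  shows "f t = 0"
proof -
  define n where "n = \<lfloor>t / L\<rfloor>"
  have "of_int n \<le> t / L" "t / L < of_int n + 1"
    unfolding n_def by linarith+
  then have "t - of_int n * L \<in> {0..L}"
    using assms(2) by (auto simp: field_simps)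
  moreover have "f (t - of_int n * L) = f t"
    using L_periodic_int[OF assms(1), of "t - of_int n * L" n] by simp
  ultimately show ?thesis
    using assms(3) by simp
qed

section \<open>Integrals\<close>

lemma integral_mult_deriv2_periodic:
  assumes F: "smooth_fun F" "L_periodic L F" and l: "smooth_fun l" "L_periodic L l" and "0 \<le> L"
  shows "integral {0..L} (\<lambda>t. F t * deriv (deriv l) t) = integral {0..L} (\<lambda>t. deriv (deriv F) t * l t)"
proof -
  define G where "G = (\<lambda>t. F t * deriv l t - deriv F t * l t)"
  have "((\<lambda>t. F t * deriv (deriv l) t - deriv (deriv F) t * l t) has_integral (G L - G 0)) {0..L}"
  proof (rule fundamental_theorem_of_calculus[OF \<open>0 \<le> L\<close>])
    fix x
    have "(G has_real_derivative F x * deriv (deriv l) x - deriv (deriv F) x * l x) (at x)"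
      unfolding G_def
      by (rule derivative_eq_intros smooth_fun_DERIV F l smooth_fun_deriv refl)+ (simp add: algebra_simps)
    then show "(G has_vector_derivative F x * deriv (deriv l) x - deriv (deriv F) x * l x) (at x within {0..L})"
      by (simp add: has_real_derivative_iff_has_vector_derivative has_vector_derivative_at_within)
  qed
  moreover have "G L = G 0"
    using L_periodic_deriv[OF F] L_periodic_deriv[OF l] F(2) l(2)
    unfolding G_def L_periodic_def by (metis add_0)
  ultimately have "integral {0..L} (\<lambda>t. F t * deriv (deriv l) t - deriv (deriv F) t * l t) = 0"
    by (simp add: integral_unique)
  then show ?thesis
    by (subst (asm) integral_diff) (auto intro!: smooth_fun_integrable smooth_fun_mult smooth_fun_deriv F l)
qed

lemma quadratic_nonneg_imp_discriminant:
  fixes a b q :: real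
  assumes "q \<ge> 0" and nonneg: "\<And>x. 0 \<le> a - 2 * x * b + x\<^sup>2 * q"
  shows "b\<^sup>2 \<le> a * q"
proof (cases "q = 0")
  case True
  show ?thesis
  proof (cases "b = 0")
    case False
    have "0 \<le> a - 2 * ((a + 1) / (2 * b)) * b"
      using nonneg[of "(a + 1) / (2 * b)"] True by simp
    with False show ?thesis
      by (simp add: field_simps)
  qed (use True in simp)
next
  case False
  with assms(1) have "q > 0"
    by simp
  moreover have "0 \<le> a - 2 * (b / q) * b + (b / q)\<^sup>2 * q"
    using nonneg .
  ultimately show ?thesis
    by (simp add: field_simps power2_eq_square)
qed

lemma Cauchy_Schwarz_integral:
  assumes f: "smooth_fun f" and g: "smooth_fun g"
  shows "(integral {a..b} (\<lambda>t. f t * g t))\<^sup>2 \<le> integral {a..b} (\<lambda>t. f t * f t) * integral {a..b} (\<lambda>t. g t * g t)"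
proof (rule quadratic_nonneg_imp_discriminant)
  show "0 \<le> integral {a..b} (\<lambda>t. g t * g t)"
    by (rule integral_nonneg) (auto intro!: smooth_fun_integrable smooth_fun_mult g)
  fix x :: real
  have "((\<lambda>t. f t * f t - 2 * x * (f t * g t) + x\<^sup>2 * (g t * g t)) has_integral
      integral {a..b} (\<lambda>t. f t * f t) - 2 * x * integral {a..b} (\<lambda>t. f t * g t)
      + x\<^sup>2 * integral {a..b} (\<lambda>t. g t * g t)) {a..b}"
    by (intro has_integral_add has_integral_diff has_integral_mult_right smooth_fun_has_integral
        smooth_fun_mult f g)
  moreover have "f t * f t - 2 * x * (f t * g t) + x\<^sup>2 * (g t * g t) = (f t - x * g t)\<^sup>2" for t
    by (simp add: algebra_simps power2_eq_square)
  ultimately show "0 \<le> integral {a..b} (\<lambda>t. f t * f t) - 2 * x * integral {a..b} (\<lambda>t. f t * g t)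
      + x\<^sup>2 * integral {a..b} (\<lambda>t. g t * g t)"
    by (metis (no_types, lifting) has_integral_nonneg zero_le_power2)
qed

lemma DERIV_integral_param:
  fixes \<Phi> \<Phi>' :: "real \<Rightarrow> real \<Rightarrow> real"
  assumes "s0 \<in> ball 0 \<delta>"
    and "\<And>s t. s \<in> ball 0 \<delta> \<Longrightarrow> t \<in> {0..L} \<Longrightarrow> ((\<lambda>s. \<Phi> s t) has_real_derivative \<Phi>' s t) (at s)"
    and "continuous_on (ball 0 \<delta> \<times> {0..L}) (\<lambda>p. \<Phi>' (fst p) (snd p))"
    and "\<And>s. s \<in> ball 0 \<delta> \<Longrightarrow> continuous_on {0..L} (\<Phi> s)"
  shows "((\<lambda>s. integral {0..L} (\<Phi> s)) has_real_derivative integral {0..L} (\<Phi>' s0)) (at s0)"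
proof -
  have "((\<lambda>s. integral (cbox 0 L) (\<Phi> s)) has_real_derivative integral (cbox 0 L) (\<Phi>' s0))
      (at s0 within ball 0 \<delta>)"
    using assms
    by (intro leibniz_rule_field_derivative)
      (auto intro: has_field_derivative_at_within integrable_continuous_interval simp: case_prod_beta')
  then show ?thesis
    using at_within_open[of s0 "ball 0 \<delta>"] assms(1) by simp
qed

lemma continuous_on_compose_snd [continuous_intros]:
  "continuous_on UNIV f \<Longrightarrow> continuous_on S (\<lambda>p. f (snd p))"
  by (rule continuous_on_compose2[OF _ continuous_on_snd]) auto

lemma small_perturbation:
  fixes f l K :: "real \<Rightarrow> real"
  assumes "continuous_on {0..L} f" "continuous_on {0..L} l" "continuous_on {0..L} K"
    and small: "\<forall>t\<in>{0..L}. \<bar>f t * K t\<bar> < 1"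
  obtains \<delta> where "\<delta> > 0" "\<And>s t. \<bar>s\<bar> < \<delta> \<Longrightarrow> t \<in> {0..L} \<Longrightarrow> \<bar>(f t + s * l t) * K t\<bar> < 1"
proof (cases "L < 0")
  case True
  then show ?thesis
    using that[of 1] by simp
next
  case False
  have cont: "continuous_on {0..L} (\<lambda>t. \<bar>f t * K t\<bar>)" "continuous_on {0..L} (\<lambda>t. \<bar>l t * K t\<bar>)"
    using assms(1-3) by (auto intro!: continuous_intros)
  obtain t0 where t0: "t0 \<in> {0..L}" "\<forall>t\<in>{0..L}. \<bar>f t * K t\<bar> \<le> \<bar>f t0 * K t0\<bar>"
    using continuous_attains_sup[OF compact_Icc _ cont(1)] False by auto
  obtain t1 where "\<forall>t\<in>{0..L}. \<bar>l t * K t\<bar> \<le> \<bar>l t1 * K t1\<bar>"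
    using continuous_attains_sup[OF compact_Icc _ cont(2)] False by auto
  then have B: "\<forall>t\<in>{0..L}. \<bar>l t * K t\<bar> \<le> \<bar>l t1 * K t1\<bar> + 1"
    by force
  define \<mu> where "\<mu> = 1 - \<bar>f t0 * K t0\<bar>"
  have \<mu>: "\<mu> > 0"
    using small t0 unfolding \<mu>_def by auto
  show ?thesis
  proof (rule that)
    show "\<mu> / (\<bar>l t1 * K t1\<bar> + 1) > 0"
      using \<mu> by (simp add: add_nonneg_pos)
    fix s t assume s: "\<bar>s\<bar> < \<mu> / (\<bar>l t1 * K t1\<bar> + 1)" and t: "t \<in> {0..L}"
    have "\<bar>s\<bar> * \<bar>l t * K t\<bar> \<le> \<bar>s\<bar> * (\<bar>l t1 * K t1\<bar> + 1)"
      using B t by (simp add: mult_left_mono)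
    also have "\<dots> < \<mu>"
      using s by (simp add: field_simps add_nonneg_pos)
    finally have "\<bar>s\<bar> * \<bar>l t * K t\<bar> < \<mu>" .
    moreover have "\<bar>(f t + s * l t) * K t\<bar> \<le> \<bar>f t * K t\<bar> + \<bar>s\<bar> * \<bar>l t * K t\<bar>"
      by (metis abs_mult abs_triangle_ineq distrib_right mult.assoc)
    ultimately show "\<bar>(f t + s * l t) * K t\<bar> < 1"
      using t0 t unfolding \<mu>_def by force
  qed
qed

section \<open>The integrand of the metric as a function of the 2-jet of f\<close>

text \<open>The arguments \<open>x, y, z\<close> stand for \<open>f, f', f''\<close> and \<open>k, k1\<close> for \<open>\<kappa>, \<kappa>'\<close> at a point.
  The suffix \<open>_var\<close> denotes the derivative along a path whose \<open>(x, y, z)\<close> has velocity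
  \<open>(a, b, c)\<close>, and \<open>_var2\<close> the derivative of \<open>_var\<close> along a second velocity \<open>(a2, b2, c2)\<close>.\<close>

definition psi_tan :: "real \<Rightarrow> real \<Rightarrow> real" where
  "psi_tan x k = 1 - x * k"

definition psi_speed2 :: "real \<Rightarrow> real \<Rightarrow> real \<Rightarrow> real" where
  "psi_speed2 x y k = (psi_tan x k)\<^sup>2 + y\<^sup>2"

definition psi_inv_speed :: "real \<Rightarrow> real \<Rightarrow> real \<Rightarrow> real" where
  "psi_inv_speed x y k = 1 / sqrt (psi_speed2 x y k)"

definition psi_curv_num :: "real \<Rightarrow> real \<Rightarrow> real \<Rightarrow> real \<Rightarrow> real \<Rightarrow> real" where
  "psi_curv_num x y z k k1 = k * (psi_tan x k)\<^sup>2 + psi_tan x k * z + 2 * k * y\<^sup>2 + x * y * k1"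

definition psi_curv :: "real \<Rightarrow> real \<Rightarrow> real \<Rightarrow> real \<Rightarrow> real \<Rightarrow> real" where
  "psi_curv x y z k k1 = psi_curv_num x y z k k1 * psi_inv_speed x y k ^ 3"

definition psi_density :: "real \<Rightarrow> real \<Rightarrow> real \<Rightarrow> real \<Rightarrow> real \<Rightarrow> real \<Rightarrow> real" where
  "psi_density A x y z k k1 = (1 + A * (psi_curv x y z k k1)\<^sup>2) * (psi_tan x k)\<^sup>2 * psi_inv_speed x y k"

definition psi_speed2_var :: "real \<Rightarrow> real \<Rightarrow> real \<Rightarrow> real \<Rightarrow> real \<Rightarrow> real" where
  "psi_speed2_var x y a b k = 2 * psi_tan x k * (- (a * k)) + 2 * y * b"

definition psi_inv_speed_var :: "real \<Rightarrow> real \<Rightarrow> real \<Rightarrow> real \<Rightarrow> real \<Rightarrow> real" where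
  "psi_inv_speed_var x y a b k = - (1/2) * psi_speed2_var x y a b k * psi_inv_speed x y k ^ 3"

definition psi_curv_num_var ::
    "real \<Rightarrow> real \<Rightarrow> real \<Rightarrow> real \<Rightarrow> real \<Rightarrow> real \<Rightarrow> real \<Rightarrow> real \<Rightarrow> real" where
  "psi_curv_num_var x y z a b c k k1 =
     2 * k * psi_tan x k * (- (a * k)) + (- (a * k)) * z + psi_tan x k * c + 4 * k * y * b
     + (a * y + x * b) * k1"

definition psi_curv_var ::
    "real \<Rightarrow> real \<Rightarrow> real \<Rightarrow> real \<Rightarrow> real \<Rightarrow> real \<Rightarrow> real \<Rightarrow> real \<Rightarrow> real" where
  "psi_curv_var x y z a b c k k1 =
     psi_curv_num_var x y z a b c k k1 * psi_inv_speed x y k ^ 3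
     + 3 * psi_curv_num x y z k k1 * psi_inv_speed x y k ^ 2 * psi_inv_speed_var x y a b k"

definition psi_density_var ::
    "real \<Rightarrow> real \<Rightarrow> real \<Rightarrow> real \<Rightarrow> real \<Rightarrow> real \<Rightarrow> real \<Rightarrow> real \<Rightarrow> real \<Rightarrow> real" where
  "psi_density_var A x y z a b c k k1 =
     2 * A * psi_curv x y z k k1 * psi_curv_var x y z a b c k k1 * (psi_tan x k)\<^sup>2 * psi_inv_speed x y k
     + (1 + A * (psi_curv x y z k k1)\<^sup>2)
       * (2 * psi_tan x k * (- (a * k)) * psi_inv_speed x y k
          + (psi_tan x k)\<^sup>2 * psi_inv_speed_var x y a b k)"

definition psi_speed2_var2 :: "real \<Rightarrow> real \<Rightarrow> real \<Rightarrow> real \<Rightarrow> real \<Rightarrow> real" where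
  "psi_speed2_var2 a b a2 b2 k = 2 * (- (a2 * k)) * (- (a * k)) + 2 * b2 * b"

definition psi_inv_speed_var2 ::
    "real \<Rightarrow> real \<Rightarrow> real \<Rightarrow> real \<Rightarrow> real \<Rightarrow> real \<Rightarrow> real \<Rightarrow> real" where
  "psi_inv_speed_var2 x y a b a2 b2 k =
     - (1/2) * (psi_speed2_var2 a b a2 b2 k * psi_inv_speed x y k ^ 3
                + psi_speed2_var x y a b k * (3 * psi_inv_speed x y k ^ 2 * psi_inv_speed_var x y a2 b2 k))"

definition psi_curv_num_var2 ::
    "real \<Rightarrow> real \<Rightarrow> real \<Rightarrow> real \<Rightarrow> real \<Rightarrow> real \<Rightarrow> real \<Rightarrow> real \<Rightarrow> real" where
  "psi_curv_num_var2 a b c a2 b2 c2 k k1 =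
     2 * k * (- (a2 * k)) * (- (a * k)) + (- (a * k)) * c2 + (- (a2 * k)) * c + 4 * k * b2 * b
     + (a * b2 + a2 * b) * k1"

definition psi_curv_var2 :: "real \<Rightarrow> real \<Rightarrow> real \<Rightarrow> real \<Rightarrow> real \<Rightarrow> real \<Rightarrow> real \<Rightarrow> real \<Rightarrow> real
    \<Rightarrow> real \<Rightarrow> real \<Rightarrow> real" where
  "psi_curv_var2 x y z a b c a2 b2 c2 k k1 =
     psi_curv_num_var2 a b c a2 b2 c2 k k1 * psi_inv_speed x y k ^ 3
     + psi_curv_num_var x y z a b c k k1 * (3 * psi_inv_speed x y k ^ 2 * psi_inv_speed_var x y a2 b2 k)
     + 3 * (psi_curv_num_var x y z a2 b2 c2 k k1 * psi_inv_speed x y k ^ 2 * psi_inv_speed_var x y a b k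
            + psi_curv_num x y z k k1 * (2 * psi_inv_speed x y k * psi_inv_speed_var x y a2 b2 k)
              * psi_inv_speed_var x y a b k
            + psi_curv_num x y z k k1 * psi_inv_speed x y k ^ 2 * psi_inv_speed_var2 x y a b a2 b2 k)"

definition psi_density_var2 :: "real \<Rightarrow> real \<Rightarrow> real \<Rightarrow> real \<Rightarrow> real \<Rightarrow> real \<Rightarrow> real \<Rightarrow> real \<Rightarrow> real
    \<Rightarrow> real \<Rightarrow> real \<Rightarrow> real \<Rightarrow> real" where
  "psi_density_var2 A x y z a b c a2 b2 c2 k k1 =
     2 * A * (psi_curv_var x y z a2 b2 c2 k k1 * psi_curv_var x y z a b c k k1 * (psi_tan x k)\<^sup>2
                * psi_inv_speed x y k
              + psi_curv x y z k k1 * psi_curv_var2 x y z a b c a2 b2 c2 k k1 * (psi_tan x k)\<^sup>2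
                * psi_inv_speed x y k
              + psi_curv x y z k k1 * psi_curv_var x y z a b c k k1 * (2 * psi_tan x k * (- (a2 * k)))
                * psi_inv_speed x y k
              + psi_curv x y z k k1 * psi_curv_var x y z a b c k k1 * (psi_tan x k)\<^sup>2
                * psi_inv_speed_var x y a2 b2 k)
     + (2 * A * psi_curv x y z k k1 * psi_curv_var x y z a2 b2 c2 k k1)
       * (2 * psi_tan x k * (- (a * k)) * psi_inv_speed x y k + (psi_tan x k)\<^sup>2 * psi_inv_speed_var x y a b k)
     + (1 + A * (psi_curv x y z k k1)\<^sup>2)
       * (2 * (- (a2 * k)) * (- (a * k)) * psi_inv_speed x y k
          + 2 * psi_tan x k * (- (a * k)) * psi_inv_speed_var x y a2 b2 k
          + 2 * psi_tan x k * (- (a2 * k)) * psi_inv_speed_var x y a b k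
          + (psi_tan x k)\<^sup>2 * psi_inv_speed_var2 x y a b a2 b2 k)"

definition density_hessian ::
    "real \<Rightarrow> real \<Rightarrow> real \<Rightarrow> real \<Rightarrow> real \<Rightarrow> real \<Rightarrow> real \<Rightarrow> real \<Rightarrow> real \<Rightarrow> real" where
  "density_hessian A k k1 a b c a2 b2 c2 =
     2 * A * k ^ 4 * a * a2 + 4 * A * k\<^sup>2 * (a * c2 + c * a2) + 2 * A * c * c2
     + (A * k\<^sup>2 - 1) * b * b2 + 2 * A * k * k1 * (a * b2 + b * a2)"

lemma psi_density_zero: "psi_density A 0 0 0 k k1 = 1 + A * k\<^sup>2"
  by (simp add: psi_density_def psi_curv_def psi_curv_num_def psi_inv_speed_def psi_speed2_def psi_tan_def)

lemma psi_density_var_zero: "psi_density_var A 0 0 0 a b c k k1 = (A * k ^ 3 - k) * a + 2 * A * k * c"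
  by (simp add: psi_density_var_def psi_curv_def psi_curv_var_def psi_curv_num_def psi_curv_num_var_def
      psi_inv_speed_def psi_inv_speed_var_def psi_speed2_var_def psi_speed2_def psi_tan_def
      algebra_simps power2_eq_square power3_eq_cube)

lemma psi_density_var2_zero:
  "psi_density_var2 A 0 0 0 a b c a2 b2 c2 k k1 = density_hessian A k k1 a b c a2 b2 c2"
  by (simp add: psi_density_var2_def psi_curv_var2_def psi_inv_speed_var2_def psi_speed2_var2_def
      psi_curv_num_var2_def psi_curv_def psi_curv_var_def psi_curv_num_def psi_curv_num_var_def
      psi_inv_speed_def psi_inv_speed_var_def psi_speed2_var_def psi_speed2_def psi_tan_def density_hessian_def
      algebra_simps power2_eq_square power3_eq_cube power4_eq_xxxx)

lemma psi_speed2_pos: "\<bar>x * k\<bar> < 1 \<Longrightarrow> psi_speed2 x y k > 0"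
  unfolding psi_speed2_def psi_tan_def
  by (smt (verit, best) abs_le_iff power2_less_0 zero_less_power2)

context
  fixes X Y Z :: "real \<Rightarrow> real" and s a b c :: real
  assumes X: "(X has_real_derivative a) (at s)"
    and Y: "(Y has_real_derivative b) (at s)"
    and Z: "(Z has_real_derivative c) (at s)"
begin

lemma DERIV_psi_tan: "((\<lambda>s. psi_tan (X s) k) has_real_derivative - (a * k)) (at s)"
  unfolding psi_tan_def by (auto intro!: derivative_eq_intros X)

lemma DERIV_psi_speed2:
  "((\<lambda>s. psi_speed2 (X s) (Y s) k) has_real_derivative psi_speed2_var (X s) (Y s) a b k) (at s)"
  unfolding psi_speed2_def psi_speed2_var_def by (auto intro!: derivative_eq_intros DERIV_psi_tan Y)

lemma DERIV_psi_curv_num: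
  "((\<lambda>s. psi_curv_num (X s) (Y s) (Z s) k k1) has_real_derivative psi_curv_num_var (X s) (Y s) (Z s) a b c k k1) (at s)"
  unfolding psi_curv_num_def psi_curv_num_var_def
  by (auto intro!: derivative_eq_intros DERIV_psi_tan X Y Z simp: algebra_simps)

lemma DERIV_psi_speed2_var:
  "((\<lambda>s. psi_speed2_var (X s) (Y s) a' b' k) has_real_derivative psi_speed2_var2 a' b' a b k) (at s)"
  unfolding psi_speed2_var_def psi_speed2_var2_def
  by (auto intro!: derivative_eq_intros DERIV_psi_tan Y simp: algebra_simps)

lemma DERIV_psi_curv_num_var:
  "((\<lambda>s. psi_curv_num_var (X s) (Y s) (Z s) a' b' c' k k1) has_real_derivative
     psi_curv_num_var2 a' b' c' a b c k k1) (at s)"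
  unfolding psi_curv_num_var_def psi_curv_num_var2_def
  by (auto intro!: derivative_eq_intros DERIV_psi_tan X Y Z simp: algebra_simps)

context
  fixes k :: real
  assumes pos: "psi_speed2 (X s) (Y s) k > 0"
begin

lemma DERIV_psi_inv_speed:
  "((\<lambda>s. psi_inv_speed (X s) (Y s) k) has_real_derivative psi_inv_speed_var (X s) (Y s) a b k) (at s)"
proof -
  let ?N = "psi_speed2 (X s) (Y s) k" and ?N' = "psi_speed2_var (X s) (Y s) a b k"
  have "((\<lambda>s. 1 / sqrt (psi_speed2 (X s) (Y s) k)) has_real_derivative
      - (?N' * (inverse (sqrt ?N) / 2)) / (sqrt ?N)\<^sup>2) (at s)"
    using pos by (auto intro!: derivative_eq_intros DERIV_psi_speed2 simp: power2_eq_square)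
  moreover have "- (?N' * (inverse (sqrt ?N) / 2)) / (sqrt ?N)\<^sup>2 = psi_inv_speed_var (X s) (Y s) a b k"
    using pos unfolding psi_inv_speed_var_def psi_inv_speed_def by (simp add: field_simps power3_eq_cube)
  ultimately show ?thesis
    unfolding psi_inv_speed_def by simp
qed

lemma DERIV_psi_curv:
  "((\<lambda>s. psi_curv (X s) (Y s) (Z s) k k1) has_real_derivative psi_curv_var (X s) (Y s) (Z s) a b c k k1) (at s)"
  unfolding psi_curv_def psi_curv_var_def
  by (auto intro!: derivative_eq_intros DERIV_psi_inv_speed DERIV_psi_curv_num simp: algebra_simps)

lemma DERIV_psi_density:
  "((\<lambda>s. psi_density A (X s) (Y s) (Z s) k k1) has_real_derivative
     psi_density_var A (X s) (Y s) (Z s) a b c k k1) (at s)"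
  unfolding psi_density_def psi_density_var_def
  by (auto intro!: derivative_eq_intros DERIV_psi_curv DERIV_psi_tan DERIV_psi_inv_speed simp: algebra_simps)

lemma DERIV_psi_inv_speed_var:
  "((\<lambda>s. psi_inv_speed_var (X s) (Y s) a' b' k) has_real_derivative psi_inv_speed_var2 (X s) (Y s) a' b' a b k) (at s)"
proof -
  have "(\<lambda>s. psi_inv_speed_var (X s) (Y s) a' b' k) =
      (\<lambda>s. - (1/2) * psi_speed2_var (X s) (Y s) a' b' k * psi_inv_speed (X s) (Y s) k ^ 3)"
    by (simp add: psi_inv_speed_var_def fun_eq_iff)
  then show ?thesis
    by simp (rule derivative_eq_intros DERIV_psi_speed2_var DERIV_psi_inv_speed refl
        | simp add: psi_inv_speed_var2_def algebra_simps)+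
qed

lemma DERIV_psi_curv_var:
  "((\<lambda>s. psi_curv_var (X s) (Y s) (Z s) a' b' c' k k1) has_real_derivative
     psi_curv_var2 (X s) (Y s) (Z s) a' b' c' a b c k k1) (at s)"
  unfolding psi_curv_var_def psi_curv_var2_def
  by (auto intro!: derivative_eq_intros DERIV_psi_curv_num_var DERIV_psi_curv_num DERIV_psi_inv_speed_var
      DERIV_psi_inv_speed simp: algebra_simps)

lemma DERIV_psi_density_var:
  "((\<lambda>s. psi_density_var A (X s) (Y s) (Z s) a' b' c' k k1) has_real_derivative
     psi_density_var2 A (X s) (Y s) (Z s) a' b' c' a b c k k1) (at s)"
  unfolding psi_density_var_def psi_density_var2_def
  by (auto intro!: derivative_eq_intros DERIV_psi_curv DERIV_psi_curv_var DERIV_psi_tan DERIV_psi_inv_speed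
      DERIV_psi_inv_speed_var simp: algebra_simps)

end

end

lemma continuous_on_psi_inv_speed [continuous_intros]:
  assumes "continuous_on S X" "continuous_on S Y" "continuous_on S K"
    and "\<And>x. x \<in> S \<Longrightarrow> psi_speed2 (X x) (Y x) (K x) > 0"
  shows "continuous_on S (\<lambda>x. psi_inv_speed (X x) (Y x) (K x))"
proof -
  have "\<forall>x\<in>S. sqrt ((1 - X x * K x)\<^sup>2 + (Y x)\<^sup>2) \<noteq> 0"
    using assms(4) unfolding psi_speed2_def psi_tan_def by (metis less_irrefl real_sqrt_eq_zero_cancel_iff)
  then show ?thesis
    unfolding psi_inv_speed_def psi_speed2_def psi_tan_def by (intro continuous_intros assms(1-3))
qed

section \<open>The metric near the curve and its variations at \<open>f = 0\<close>\<close>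

locale unit_speed_curve =
  fixes c :: "real \<Rightarrow> complex"
  assumes smooth_c: "smooth_curve c"
    and unit_speed: "\<forall>t. cmod (vderiv c t) = 1"
begin

lemma curv_eq:
  "curv c = (\<lambda>t. Re (vderiv c t) * Im (vderiv (vderiv c) t) - Im (vderiv c t) * Re (vderiv (vderiv c) t))"
  using unit_speed by (auto simp: curv_def fun_eq_iff algebra_simps)

lemma smooth_fun_curv: "smooth_fun (curv c)"
  unfolding curv_eq by (intro smooth_fun_diff smooth_fun_mult smooth_fun_Re_Im smooth_curve_vderiv smooth_c)

text \<open>Frenet equation: differentiating \<open>|c'|\<^sup>2 = 1\<close> shows \<open>c'' \<perp> c'\<close>.\<close>

lemma vderiv_vderiv_eq: "vderiv (vderiv c) t = \<i> * complex_of_real (curv c t) * vderiv c t"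
proof -
  define x where "x = (\<lambda>t. Re (vderiv c t))"
  define y where "y = (\<lambda>t. Im (vderiv c t))"
  let ?x' = "Re (vderiv (vderiv c) t)" and ?y' = "Im (vderiv (vderiv c) t)"
  have one: "x t ^ 2 + y t ^ 2 = 1" for t
    using unit_speed unfolding x_def y_def by (metis cmod_power2 one_power2)
  have "(x has_real_derivative ?x') (at t)" "(y has_real_derivative ?y') (at t)"
    unfolding x_def y_def using smooth_curve_has_vderiv[OF smooth_curve_vderiv[OF smooth_c]]
    by (auto simp: has_vector_derivative_complex_iff)
  then have "((\<lambda>t. x t ^ 2 + y t ^ 2) has_real_derivative 2 * x t * ?x' + 2 * y t * ?y') (at t)"
    by (auto intro!: derivative_eq_intros)
  then have orth: "2 * x t * ?x' + 2 * y t * ?y' = 0"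
    unfolding one using DERIV_const DERIV_unique by blast
  have k: "curv c t = x t * ?y' - y t * ?x'"
    unfolding curv_eq x_def y_def by simp
  show ?thesis
    by (rule complex_eqI) (use one[of t] orth in \<open>simp add: k x_def y_def; algebra\<close>)+
qed

lemma vderiv_psi:
  assumes "smooth_fun f"
  shows "vderiv (psi c f) t = vderiv c t * (complex_of_real (psi_tan (f t) (curv c t)) + \<i> * deriv f t)"
proof -
  have "(psi c f has_vector_derivative vderiv c t + (f t * \<i> * vderiv (vderiv c) t
      + (deriv f t * \<i> + f t * 0) * vderiv c t)) (at t)"
    unfolding psi_def
    by (rule derivative_eq_intros smooth_curve_has_vderiv smooth_c smooth_curve_vderiv
        smooth_fun_DERIV assms refl)+ (simp add: algebra_simps)
  also have "vderiv c t + (f t * \<i> * vderiv (vderiv c) t + (deriv f t * \<i> + f t * 0) * vderiv c t)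
      = vderiv c t * (complex_of_real (psi_tan (f t) (curv c t)) + \<i> * deriv f t)"
    unfolding vderiv_vderiv_eq psi_tan_def by (simp add: algebra_simps)
  finally show ?thesis
    unfolding vderiv_def using vector_derivative_at by blast
qed

lemma vderiv_vderiv_psi:
  assumes "smooth_fun f"
  shows "vderiv (vderiv (psi c f)) t = vderiv c t *
      (complex_of_real (- (deriv f t * curv c t + f t * deriv (curv c) t)) + \<i> * deriv (deriv f) t
       + \<i> * curv c t * (complex_of_real (psi_tan (f t) (curv c t)) + \<i> * deriv f t))"
proof -
  have "((\<lambda>t. vderiv c t * (complex_of_real (psi_tan (f t) (curv c t)) + \<i> * deriv f t)) has_vector_derivative
      vderiv c t * (complex_of_real (0 - (deriv f t * curv c t + deriv (curv c) t * f t))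
        + \<i> * deriv (deriv f) t)
      + vderiv (vderiv c) t * (complex_of_real (psi_tan (f t) (curv c t)) + \<i> * deriv f t)) (at t)"
    unfolding psi_tan_def
    by (rule derivative_eq_intros smooth_curve_has_vderiv smooth_curve_vderiv smooth_c
        smooth_fun_DERIV smooth_fun_deriv smooth_fun_curv assms refl)+ (simp add: algebra_simps)
  then have "vderiv (\<lambda>t. vderiv c t * (complex_of_real (psi_tan (f t) (curv c t)) + \<i> * deriv f t)) t =
      vderiv c t * (complex_of_real (0 - (deriv f t * curv c t + deriv (curv c) t * f t))
        + \<i> * deriv (deriv f) t)
      + vderiv (vderiv c) t * (complex_of_real (psi_tan (f t) (curv c t)) + \<i> * deriv f t)"
    unfolding vderiv_def by (rule vector_derivative_at)
  moreover have "vderiv (psi c f) = (\<lambda>t. vderiv c t * (complex_of_real (psi_tan (f t) (curv c t)) + \<i> * deriv f t))"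
    by (rule ext) (rule vderiv_psi[OF assms])
  ultimately show ?thesis
    by (simp add: vderiv_vderiv_eq algebra_simps)
qed

lemma curv_psi:
  assumes "smooth_fun f"
  shows "curv (psi c f) t = psi_curv (f t) (deriv f t) (deriv (deriv f) t) (curv c t) (deriv (curv c) t)"
proof -
  define a where "a = complex_of_real (psi_tan (f t) (curv c t)) + \<i> * deriv f t"
  define a' where "a' = complex_of_real (- (deriv f t * curv c t + f t * deriv (curv c) t))
    + \<i> * deriv (deriv f) t + \<i> * curv c t * a"
  have "cnj (vderiv c t) * vderiv c t = 1"
    using unit_speed complex_norm_square[of "vderiv c t"] by (simp add: mult.commute)
  then have "Im (cnj (vderiv c t * a) * (vderiv c t * a')) = Im (cnj a * a')"
    by (metis complex_cnj_mult mult.assoc mult.left_commute mult_1)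
  also have "\<dots> = psi_curv_num (f t) (deriv f t) (deriv (deriv f) t) (curv c t) (deriv (curv c) t)"
    unfolding psi_curv_num_def a_def a'_def by (simp add: algebra_simps power2_eq_square)
  finally have num: "Im (cnj (vderiv c t * a) * (vderiv c t * a')) = \<dots>" .
  have "cmod (vderiv c t * a) = cmod a"
    using unit_speed by (simp add: norm_mult)
  also have "\<dots> = sqrt (psi_speed2 (f t) (deriv f t) (curv c t))"
    unfolding a_def psi_speed2_def cmod_def by simp
  finally have den: "cmod (vderiv c t * a) = \<dots>" .
  show ?thesis
    unfolding curv_def[of "psi c f"] vderiv_psi[OF assms] vderiv_vderiv_psi[OF assms, folded a_def]
      a_def[symmetric] a'_def[symmetric] num den psi_curv_def psi_inv_speed_def
    by (simp add: power_divide)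
qed

lemma Gm_eq_psi_density:
  assumes "smooth_fun f"
  shows "Gm c A L f h k = integral {0..L} (\<lambda>t. h t * k t *
    psi_density A (f t) (deriv f t) (deriv (deriv f) t) (curv c t) (deriv (curv c) t))"
  unfolding Gm_def curv_psi[OF assms] psi_density_def psi_inv_speed_def psi_speed2_def psi_tan_def
  by (intro arg_cong[where f = "integral {0..L}"] ext) (simp add: field_simps)

lemma Gm_line:
  assumes f: "smooth_fun f" and l: "smooth_fun l"
  shows "Gm c A L (\<lambda>t. f t + s * l t) h k = integral {0..L} (\<lambda>t. h t * k t *
    psi_density A (f t + s * l t) (deriv f t + s * deriv l t) (deriv (deriv f) t + s * deriv (deriv l) t)
      (curv c t) (deriv (curv c) t))"
proof -
  have "smooth_fun (\<lambda>t. f t + s * l t)"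
    by (intro smooth_fun_add smooth_fun_mult smooth_fun_const f l)
  then show ?thesis
    by (simp only: Gm_eq_psi_density deriv_line[OF f l]
        deriv_line[OF smooth_fun_deriv[OF f] smooth_fun_deriv[OF l]])
qed

lemma DERIV_Gm_line:
  assumes f: "smooth_fun f" and l: "smooth_fun l" and h: "smooth_fun h" and k: "smooth_fun k"
    and small: "\<forall>t\<in>{0..L}. \<bar>f t * curv c t\<bar> < 1"
  shows "((\<lambda>s. Gm c A L (\<lambda>t. f t + s * l t) h k) has_real_derivative
    integral {0..L} (\<lambda>t. h t * k t * psi_density_var A (f t) (deriv f t) (deriv (deriv f) t)
      (l t) (deriv l t) (deriv (deriv l) t) (curv c t) (deriv (curv c) t))) (at 0)"
proof -
  obtain \<delta> where "\<delta> > 0" and bound: "\<And>s t. \<bar>s\<bar> < \<delta> \<Longrightarrow> t \<in> {0..L} \<Longrightarrow> \<bar>(f t + s * l t) * curv c t\<bar> < 1"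
    using small_perturbation[OF _ _ _ small] f l smooth_fun_curv smooth_fun_continuous_on by metis
  have pos: "psi_speed2 (f t + s * l t) (deriv f t + s * deriv l t) (curv c t) > 0"
    if "s \<in> ball 0 \<delta>" "t \<in> {0..L}" for s t
    using bound that by (intro psi_speed2_pos) auto
  define \<Phi> where "\<Phi> s t = h t * k t * psi_density A (f t + s * l t) (deriv f t + s * deriv l t)
    (deriv (deriv f) t + s * deriv (deriv l) t) (curv c t) (deriv (curv c) t)" for s t
  define \<Phi>' where "\<Phi>' s t = h t * k t * psi_density_var A (f t + s * l t) (deriv f t + s * deriv l t)
    (deriv (deriv f) t + s * deriv (deriv l) t) (l t) (deriv l t) (deriv (deriv l) t)
    (curv c t) (deriv (curv c) t)" for s t
  have "((\<lambda>s. integral {0..L} (\<Phi> s)) has_real_derivative integral {0..L} (\<Phi>' 0)) (at 0)"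
  proof (rule DERIV_integral_param)
    show "0 \<in> ball 0 \<delta>"
      using \<open>\<delta> > 0\<close> by simp
    show "((\<lambda>s. \<Phi> s t) has_real_derivative \<Phi>' s t) (at s)" if "s \<in> ball 0 \<delta>" "t \<in> {0..L}" for s t
      unfolding \<Phi>_def \<Phi>'_def using pos[OF that]
      by (intro DERIV_cmult DERIV_psi_density) (auto intro!: derivative_eq_intros)
    show "continuous_on (ball 0 \<delta> \<times> {0..L}) (\<lambda>p. \<Phi>' (fst p) (snd p))"
      unfolding \<Phi>'_def psi_density_var_def psi_curv_var_def psi_inv_speed_var_def psi_speed2_var_def
        psi_curv_num_var_def psi_curv_def psi_curv_num_def psi_tan_def
      by (intro continuous_intros smooth_fun_continuous_on smooth_fun_deriv smooth_fun_curv f l h k)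
        (use pos in \<open>auto simp: mem_Times_iff\<close>)
    show "continuous_on {0..L} (\<Phi> s)" if "s \<in> ball 0 \<delta>" for s
      unfolding \<Phi>_def psi_density_def psi_curv_def psi_curv_num_def psi_tan_def
      by (intro continuous_intros smooth_fun_continuous_on smooth_fun_deriv smooth_fun_curv f l h k)
        (use pos that in auto)
  qed
  then show ?thesis
    unfolding Gm_line[OF f l] \<Phi>_def \<Phi>'_def by simp
qed

lemma dG_zero:
  assumes "smooth_fun l" "smooth_fun h" "smooth_fun k"
  shows "dG c A L (\<lambda>_. 0) l h k = integral {0..L} (\<lambda>t. h t * k t *
    ((A * curv c t ^ 3 - curv c t) * l t + 2 * A * curv c t * deriv (deriv l) t))"
  unfolding dG_def using DERIV_imp_deriv[OF DERIV_Gm_line[of "\<lambda>_. 0" l h k]] assms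
  by (simp add: smooth_fun_const psi_density_var_zero)

lemma small_multiple:
  assumes "smooth_fun m"
  obtains \<delta> where "\<delta> > 0" "\<And>r t. \<bar>r\<bar> < \<delta> \<Longrightarrow> t \<in> {0..L} \<Longrightarrow> \<bar>r * m t * curv c t\<bar> < 1"
  using small_perturbation[of L "\<lambda>_. 0" m "curv c"] assms smooth_fun_curv smooth_fun_continuous_on
  by (metis continuous_on_const abs_zero add_0 mult_zero_left zero_less_one)

lemma DERIV_integral_psi_density_var:
  assumes m: "smooth_fun m" and l: "smooth_fun l" and h: "smooth_fun h" and k: "smooth_fun k"
  shows "((\<lambda>r. integral {0..L} (\<lambda>t. h t * k t * psi_density_var A (r * m t) (r * deriv m t)
      (r * deriv (deriv m) t) (l t) (deriv l t) (deriv (deriv l) t) (curv c t) (deriv (curv c) t)))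
    has_real_derivative integral {0..L} (\<lambda>t. h t * k t * density_hessian A (curv c t) (deriv (curv c) t)
      (l t) (deriv l t) (deriv (deriv l) t) (m t) (deriv m t) (deriv (deriv m) t))) (at 0)"
proof -
  obtain \<delta> where "\<delta> > 0" and bound: "\<And>r t. \<bar>r\<bar> < \<delta> \<Longrightarrow> t \<in> {0..L} \<Longrightarrow> \<bar>r * m t * curv c t\<bar> < 1"
    using small_multiple[OF m] by blast
  have pos: "psi_speed2 (r * m t) (r * deriv m t) (curv c t) > 0" if "r \<in> ball 0 \<delta>" "t \<in> {0..L}" for r t
    using bound that by (intro psi_speed2_pos) auto
  define \<Phi> where "\<Phi> r t = h t * k t * psi_density_var A (r * m t) (r * deriv m t) (r * deriv (deriv m) t)
    (l t) (deriv l t) (deriv (deriv l) t) (curv c t) (deriv (curv c) t)" for r t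
  define \<Phi>' where "\<Phi>' r t = h t * k t * psi_density_var2 A (r * m t) (r * deriv m t) (r * deriv (deriv m) t)
    (l t) (deriv l t) (deriv (deriv l) t) (m t) (deriv m t) (deriv (deriv m) t) (curv c t) (deriv (curv c) t)"
    for r t
  have "((\<lambda>r. integral {0..L} (\<Phi> r)) has_real_derivative integral {0..L} (\<Phi>' 0)) (at 0)"
  proof (rule DERIV_integral_param)
    show "0 \<in> ball 0 \<delta>"
      using \<open>\<delta> > 0\<close> by simp
    show "((\<lambda>r. \<Phi> r t) has_real_derivative \<Phi>' r t) (at r)" if "r \<in> ball 0 \<delta>" "t \<in> {0..L}" for r t
      unfolding \<Phi>_def \<Phi>'_def using pos[OF that]
      by (intro DERIV_cmult DERIV_psi_density_var) (auto intro!: derivative_eq_intros)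
    show "continuous_on (ball 0 \<delta> \<times> {0..L}) (\<lambda>p. \<Phi>' (fst p) (snd p))"
      unfolding \<Phi>'_def psi_density_var2_def psi_curv_var2_def psi_inv_speed_var2_def psi_speed2_var2_def
        psi_curv_num_var2_def psi_density_var_def psi_curv_var_def psi_inv_speed_var_def psi_speed2_var_def
        psi_curv_num_var_def psi_curv_def psi_curv_num_def psi_tan_def
      by (intro continuous_intros smooth_fun_continuous_on smooth_fun_deriv smooth_fun_curv m l h k)
        (use pos in \<open>auto simp: mem_Times_iff\<close>)
    show "continuous_on {0..L} (\<Phi> r)" if "r \<in> ball 0 \<delta>" for r
      unfolding \<Phi>_def psi_density_var_def psi_curv_var_def psi_inv_speed_var_def psi_speed2_var_def
        psi_curv_num_var_def psi_curv_def psi_curv_num_def psi_tan_def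
      by (intro continuous_intros smooth_fun_continuous_on smooth_fun_deriv smooth_fun_curv m l h k)
        (use pos that in auto)
  qed
  then show ?thesis
    unfolding \<Phi>_def \<Phi>'_def by (simp add: psi_density_var2_zero)
qed

text \<open>The inner derivative of \<open>d\<^sup>2G\<close> is the first variation at \<open>r m\<close>, for all small \<open>r\<close>.\<close>

lemma d2G_zero:
  assumes m: "smooth_fun m" and l: "smooth_fun l" and h: "smooth_fun h" and k: "smooth_fun k"
  shows "d2G c A L (\<lambda>_. 0) m l h k = integral {0..L} (\<lambda>t. h t * k t *
    density_hessian A (curv c t) (deriv (curv c) t) (l t) (deriv l t) (deriv (deriv l) t)
      (m t) (deriv m t) (deriv (deriv m) t))"
proof -
  obtain \<delta> where "\<delta> > 0" and bound: "\<And>r t. \<bar>r\<bar> < \<delta> \<Longrightarrow> t \<in> {0..L} \<Longrightarrow> \<bar>r * m t * curv c t\<bar> < 1"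
    using small_multiple[OF m] by blast
  have deriv_scale: "deriv (\<lambda>t. r * g t) = (\<lambda>t. r * deriv g t)" if "smooth_fun g" for r g
    using deriv_line[OF smooth_fun_const that, of 0 r] by simp
  have "deriv (\<lambda>s. Gm c A L (\<lambda>t. r * m t + s * l t) h k) 0 = integral {0..L} (\<lambda>t. h t * k t *
      psi_density_var A (r * m t) (r * deriv m t) (r * deriv (deriv m) t) (l t) (deriv l t) (deriv (deriv l) t)
        (curv c t) (deriv (curv c) t))"
    if "r \<in> ball 0 \<delta>" for r
    using DERIV_imp_deriv[OF DERIV_Gm_line[of "\<lambda>t. r * m t" l h k]] bound that m l h k
    by (simp add: deriv_scale smooth_fun_deriv smooth_fun_mult smooth_fun_const)
  then have "((\<lambda>r. deriv (\<lambda>s. Gm c A L (\<lambda>t. r * m t + s * l t) h k) 0) has_real_derivative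
      integral {0..L} (\<lambda>t. h t * k t * density_hessian A (curv c t) (deriv (curv c) t) (l t) (deriv l t)
        (deriv (deriv l) t) (m t) (deriv m t) (deriv (deriv m) t))) (at 0)"
    using \<open>\<delta> > 0\<close>
    by (intro has_field_derivative_transform_within_open[OF DERIV_integral_psi_density_var[OF m l h k],
        where S = "ball 0 \<delta>"]) auto
  then show ?thesis
    unfolding d2G_def by (simp add: DERIV_imp_deriv)
qed

lemma Gm_zero: "Gm c A L (\<lambda>_. 0) g l = integral {0..L} (\<lambda>t. g t * l t * (1 + A * (curv c t)\<^sup>2))"
  using Gm_eq_psi_density[of "\<lambda>_. 0"] by (simp add: smooth_fun_const psi_density_zero)

end

section \<open>The Christoffel symbol at \<open>f = 0\<close>\<close>

definition christoffel_num :: "real \<Rightarrow> real \<Rightarrow> real \<Rightarrow> real \<Rightarrow> real \<Rightarrow> real \<Rightarrow> real \<Rightarrow> real \<Rightarrow> real" where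
  "christoffel_num A k k1 k2 a a1 b b1 =
     (1/2 * k - 1/2 * A * k ^ 3 + A * k2) * a * b + 2 * A * k1 * (a1 * b + a * b1) + 2 * A * k * a1 * b1"

definition christoffel0 :: "(real \<Rightarrow> complex) \<Rightarrow> real \<Rightarrow> (real \<Rightarrow> real) \<Rightarrow> (real \<Rightarrow> real) \<Rightarrow> real \<Rightarrow> real" where
  "christoffel0 c A h k = (\<lambda>t. christoffel_num A (curv c t) (deriv (curv c) t) (deriv (deriv (curv c)) t)
     (h t) (deriv h t) (k t) (deriv k t) / (1 + A * (curv c t)\<^sup>2))"

lemma one_plus_nonneg_square_pos: "A \<ge> 0 \<Longrightarrow> 1 + A * x\<^sup>2 > (0::real)"
  by (simp add: add_pos_nonneg)

locale closed_unit_speed_curve = unit_speed_curve +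
  fixes L :: real
  assumes L_pos: "L > 0"
    and periodic: "L_periodic L c"
begin

lemma L_periodic_curv: "L_periodic L (curv c)"
  using L_periodic_vderiv[OF smooth_c periodic]
    L_periodic_vderiv[OF smooth_curve_vderiv[OF smooth_c] L_periodic_vderiv[OF smooth_c periodic]]
  by (simp add: L_periodic_def curv_def)

lemma christoffel0_Cinf:
  assumes A: "A \<ge> 0" and "h \<in> Cinf L" "k \<in> Cinf L"
  shows "christoffel0 c A h k \<in> Cinf L"
proof -
  have h: "smooth_fun h" "L_periodic L h" and k: "smooth_fun k" "L_periodic L k"
    using assms by (auto simp: Cinf_def)
  have "smooth_fun (christoffel0 c A h k)"
    unfolding christoffel0_def christoffel_num_def
    using one_plus_nonneg_square_pos[OF A]
    by (intro smooth_fun_const smooth_fun_divide smooth_fun_add smooth_fun_diff smooth_fun_mult smooth_fun_power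
        smooth_fun_deriv smooth_fun_curv h(1) k(1)) (auto simp: less_imp_neq[symmetric])
  moreover have "L_periodic L (christoffel0 c A h k)"
    using L_periodic_curv L_periodic_deriv[OF smooth_fun_curv L_periodic_curv]
      L_periodic_deriv[OF smooth_fun_deriv[OF smooth_fun_curv] L_periodic_deriv[OF smooth_fun_curv L_periodic_curv]]
      h k L_periodic_deriv[OF h] L_periodic_deriv[OF k]
    unfolding christoffel0_def L_periodic_def by simp
  ultimately show ?thesis
    by (simp add: Cinf_def)
qed

lemma dG_zero_by_parts:
  assumes "h \<in> Cinf L" "k \<in> Cinf L" "l \<in> Cinf L"
  shows "dG c A L (\<lambda>_. 0) l h k = integral {0..L} (\<lambda>t. l t * ((A * curv c t ^ 3 - curv c t) * h t * k t
    + 2 * A * (deriv (deriv (curv c)) t * h t * k t + 2 * deriv (curv c) t * (deriv h t * k t + h t * deriv k t)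
      + curv c t * (deriv (deriv h) t * k t + 2 * deriv h t * deriv k t + h t * deriv (deriv k) t))))"
proof -
  note \<kappa> = smooth_fun_curv
  have h: "smooth_fun h" "L_periodic L h" and k: "smooth_fun k" "L_periodic L k"
    and l: "smooth_fun l" "L_periodic L l"
    using assms by (auto simp: Cinf_def)
  define F where "F = (\<lambda>t. 2 * A * curv c t * h t * k t)"
  have F: "smooth_fun F" "L_periodic L F"
    unfolding F_def using L_periodic_curv h k
    by (auto simp: L_periodic_def intro!: smooth_fun_mult smooth_fun_const \<kappa>)
  have "deriv F = (\<lambda>t. 2 * A * (deriv (curv c) t * h t * k t + curv c t * deriv h t * k t
      + curv c t * h t * deriv k t))"
    unfolding F_def
    by (rule ext, rule DERIV_imp_deriv)
      (rule derivative_eq_intros smooth_fun_DERIV \<kappa> h k refl | simp add: algebra_simps)+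
  then have F'': "deriv (deriv F) = (\<lambda>t. 2 * A * (deriv (deriv (curv c)) t * h t * k t
      + 2 * deriv (curv c) t * (deriv h t * k t + h t * deriv k t)
      + curv c t * (deriv (deriv h) t * k t + 2 * deriv h t * deriv k t + h t * deriv (deriv k) t)))"
    by (intro ext DERIV_imp_deriv)
      (rule derivative_eq_intros smooth_fun_DERIV \<kappa> h k smooth_fun_deriv refl | simp add: algebra_simps)+
  let ?E = "\<lambda>t. (A * curv c t ^ 3 - curv c t) * h t * k t * l t"
  have sE: "smooth_fun ?E"
    by (intro smooth_fun_mult smooth_fun_diff smooth_fun_power smooth_fun_const \<kappa> h(1) k(1) l(1))
  have "dG c A L (\<lambda>_. 0) l h k = integral {0..L} ?E + integral {0..L} (\<lambda>t. F t * deriv (deriv l) t)"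
    unfolding dG_zero[OF l(1) h(1) k(1)] F_def
    by (subst integral_add[symmetric])
      (auto intro!: smooth_fun_integrable smooth_fun_mult smooth_fun_deriv smooth_fun_const sE \<kappa> h k l
        simp: algebra_simps)
  also have "\<dots> = integral {0..L} ?E + integral {0..L} (\<lambda>t. deriv (deriv F) t * l t)"
    using integral_mult_deriv2_periodic[OF F l] L_pos by simp
  also have "\<dots> = integral {0..L} (\<lambda>t. ?E t + deriv (deriv F) t * l t)"
    by (intro integral_add[symmetric] smooth_fun_integrable sE smooth_fun_mult smooth_fun_deriv F(1) l(1))
  finally show ?thesis
    unfolding F'' by (simp add: algebra_simps)
qed

lemma christoffel0_Koszul:
  assumes A: "A \<ge> 0" and "h \<in> Cinf L" "k \<in> Cinf L" "l \<in> Cinf L"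
  shows "2 * Gm c A L (\<lambda>_. 0) (christoffel0 c A h k) l =
    dG c A L (\<lambda>_. 0) l h k - dG c A L (\<lambda>_. 0) h k l - dG c A L (\<lambda>_. 0) k l h"
proof -
  have h: "smooth_fun h" and k: "smooth_fun k" and l: "smooth_fun l"
    using assms by (auto simp: Cinf_def)
  have "2 * (christoffel0 c A h k t * l t * (1 + A * (curv c t)\<^sup>2)) =
      l t * ((A * curv c t ^ 3 - curv c t) * h t * k t
        + 2 * A * (deriv (deriv (curv c)) t * h t * k t + 2 * deriv (curv c) t * (deriv h t * k t + h t * deriv k t)
          + curv c t * (deriv (deriv h) t * k t + 2 * deriv h t * deriv k t + h t * deriv (deriv k) t)))
      - k t * l t * ((A * curv c t ^ 3 - curv c t) * h t + 2 * A * curv c t * deriv (deriv h) t)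
      - l t * h t * ((A * curv c t ^ 3 - curv c t) * k t + 2 * A * curv c t * deriv (deriv k) t)" for t
    using one_plus_nonneg_square_pos[OF A, of "curv c t"]
    unfolding christoffel0_def christoffel_num_def by (simp add: field_simps power2_eq_square power3_eq_cube)
  moreover have "((\<lambda>t. l t * ((A * curv c t ^ 3 - curv c t) * h t * k t
        + 2 * A * (deriv (deriv (curv c)) t * h t * k t + 2 * deriv (curv c) t * (deriv h t * k t + h t * deriv k t)
          + curv c t * (deriv (deriv h) t * k t + 2 * deriv h t * deriv k t + h t * deriv (deriv k) t)))
      - k t * l t * ((A * curv c t ^ 3 - curv c t) * h t + 2 * A * curv c t * deriv (deriv h) t)
      - l t * h t * ((A * curv c t ^ 3 - curv c t) * k t + 2 * A * curv c t * deriv (deriv k) t))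
      has_integral dG c A L (\<lambda>_. 0) l h k - dG c A L (\<lambda>_. 0) h k l - dG c A L (\<lambda>_. 0) k l h) {0..L}"
    unfolding dG_zero_by_parts[OF assms(2-4)] dG_zero[OF h k l] dG_zero[OF k l h]
    by (intro has_integral_diff smooth_fun_has_integral; intro smooth_fun_add smooth_fun_diff smooth_fun_mult
        smooth_fun_power smooth_fun_const smooth_fun_deriv smooth_fun_curv h k l)
  ultimately have "integral {0..L} (\<lambda>t. 2 * (christoffel0 c A h k t * l t * (1 + A * (curv c t)\<^sup>2))) =
      dG c A L (\<lambda>_. 0) l h k - dG c A L (\<lambda>_. 0) h k l - dG c A L (\<lambda>_. 0) k l h"
    by (simp add: integral_unique)
  then show ?thesis
    unfolding Gm_zero by simp
qed

lemma Gm_zero_diff_left: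
  assumes "smooth_fun g" "smooth_fun g'" "smooth_fun l"
  shows "Gm c A L (\<lambda>_. 0) (\<lambda>t. g t - g' t) l = Gm c A L (\<lambda>_. 0) g l - Gm c A L (\<lambda>_. 0) g' l"
  unfolding Gm_zero
  by (subst integral_diff[symmetric])
    (auto simp: algebra_simps intro!: smooth_fun_integrable smooth_fun_mult smooth_fun_add smooth_fun_power
      smooth_fun_const smooth_fun_curv assms)

lemma Gm_zero_definite:
  assumes A: "A \<ge> 0" and g: "g \<in> Cinf L" and "Gm c A L (\<lambda>_. 0) g g = 0"
  shows "g = (\<lambda>_. 0)"
proof -
  let ?q = "\<lambda>t. g t * g t * (1 + A * (curv c t)\<^sup>2)"
  have sg: "smooth_fun g" "L_periodic L g"
    using g by (auto simp: Cinf_def)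
  have sq: "smooth_fun ?q"
    by (intro smooth_fun_mult smooth_fun_add smooth_fun_power smooth_fun_const smooth_fun_curv sg(1))
  have "(?q has_integral 0) (cbox 0 L)"
    using smooth_fun_has_integral[OF sq, of 0 L] assms(3) unfolding Gm_zero by simp
  moreover have "0 \<le> ?q t" for t
    by (rule mult_nonneg_nonneg[OF zero_le_square less_imp_le[OF one_plus_nonneg_square_pos[OF A]]])
  ultimately have "?q t = 0" if "t \<in> {0..L}" for t
    using that L_pos by (intro has_integral_0_cbox_imp_0[of 0 L ?q]) (auto intro: smooth_fun_continuous_on sq)
  then have "g t = 0" if "t \<in> {0..L}" for t
    using that one_plus_nonneg_square_pos[OF A, of "curv c t"] by fastforce
  then show ?thesis
    using L_periodic_zero[OF sg(2) L_pos] by blast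
qed

lemma Chr_zero_eq:
  assumes A: "A \<ge> 0" and h: "h \<in> Cinf L" and k: "k \<in> Cinf L"
  shows "Chr c A L (\<lambda>_. 0) h k = christoffel0 c A h k"
  unfolding Chr_def
proof (rule the_equality)
  let ?\<Gamma> = "christoffel0 c A h k"
  show "?\<Gamma> \<in> Cinf L \<and> (\<forall>l\<in>Cinf L. 2 * Gm c A L (\<lambda>_. 0) ?\<Gamma> l =
      dG c A L (\<lambda>_. 0) l h k - dG c A L (\<lambda>_. 0) h k l - dG c A L (\<lambda>_. 0) k l h)"
    using christoffel0_Cinf[OF assms] christoffel0_Koszul[OF assms] by blast
  fix g assume g: "g \<in> Cinf L \<and> (\<forall>l\<in>Cinf L. 2 * Gm c A L (\<lambda>_. 0) g l =
      dG c A L (\<lambda>_. 0) l h k - dG c A L (\<lambda>_. 0) h k l - dG c A L (\<lambda>_. 0) k l h)"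
  define d where "d = (\<lambda>t. g t - ?\<Gamma> t)"
  have \<Gamma>: "?\<Gamma> \<in> Cinf L"
    using christoffel0_Cinf[OF assms] .
  then have d: "d \<in> Cinf L"
    using g unfolding d_def Cinf_def L_periodic_def by auto
  have "Gm c A L (\<lambda>_. 0) d d = Gm c A L (\<lambda>_. 0) g d - Gm c A L (\<lambda>_. 0) ?\<Gamma> d"
    unfolding d_def using g \<Gamma> d unfolding Cinf_def d_def by (intro Gm_zero_diff_left) auto
  also have "\<dots> = 0"
    using g d christoffel0_Koszul[OF assms d] by auto
  finally have "d = (\<lambda>_. 0)"
    using Gm_zero_definite[OF A d] by blast
  then show "g = ?\<Gamma>"
    unfolding d_def by (simp add: fun_eq_iff)
qed

end

section \<open>The curvature tensor at \<open>f = 0\<close>\<close>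

lemma bilinear_gram_identity:
  fixes \<alpha> \<beta> \<gamma> m m1 h h1 :: real
  shows "(\<alpha> * m * m + \<beta> * (m1 * m + m * m1) + \<gamma> * m1 * m1) * (\<alpha> * h * h + \<beta> * (h1 * h + h * h1) + \<gamma> * h1 * h1)
    - (\<alpha> * h * m + \<beta> * (h1 * m + h * m1) + \<gamma> * h1 * m1) * (\<alpha> * m * h + \<beta> * (m1 * h + m * h1) + \<gamma> * m1 * h1)
    = (\<alpha> * \<gamma> - \<beta>\<^sup>2) * (m * h1 - m1 * h)\<^sup>2"
  by (simp add: algebra_simps power2_eq_square)

lemma density_hessian_combination:
  "- (h * m * density_hessian A k k1 h h1 h2 m m1 m2) + 1/2 * (h * h * density_hessian A k k1 m m1 m2 m m1 m2)
   + 1/2 * (m * m * density_hessian A k k1 h h1 h2 h h1 h2)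
   = (A * k\<^sup>2 - 1) / 2 * (m * h1 - m1 * h)\<^sup>2 + A * (m * h2 - m2 * h)\<^sup>2"
  unfolding density_hessian_def by (simp add: field_simps power2_eq_square)

lemma curvature_integrand_identity:
  fixes A k k1 k2 m m1 m2 h h1 h2 :: real
  defines "E \<equiv> 1 + A * k\<^sup>2"
  assumes "E \<noteq> 0"
  shows "- (h * m * density_hessian A k k1 h h1 h2 m m1 m2) + 1/2 * (h * h * density_hessian A k k1 m m1 m2 m m1 m2)
     + 1/2 * (m * m * density_hessian A k k1 h h1 h2 h h1 h2)
     - christoffel_num A k k1 k2 h h1 m m1 / E * (christoffel_num A k k1 k2 m m1 h h1 / E) * E
     + christoffel_num A k k1 k2 m m1 m m1 / E * (christoffel_num A k k1 k2 h h1 h h1 / E) * E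
   = (- (A * k\<^sup>2 - 1)\<^sup>2 + 4 * A\<^sup>2 * k * k2 - 8 * A\<^sup>2 * k1\<^sup>2) / (2 * E) * (m * h1 - m1 * h)\<^sup>2
     + A * (m * h2 - m2 * h)\<^sup>2"
proof -
  let ?\<alpha> = "1/2 * k - 1/2 * A * k ^ 3 + A * k2"
  have "- christoffel_num A k k1 k2 h h1 m m1 / E * (christoffel_num A k k1 k2 m m1 h h1 / E) * E
      + christoffel_num A k k1 k2 m m1 m m1 / E * (christoffel_num A k k1 k2 h h1 h h1 / E) * E
      = (christoffel_num A k k1 k2 m m1 m m1 * christoffel_num A k k1 k2 h h1 h h1
         - christoffel_num A k k1 k2 h h1 m m1 * christoffel_num A k k1 k2 m m1 h h1) / E"
    using assms(2) by (simp add: field_simps power2_eq_square)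
  also have "\<dots> = (?\<alpha> * (2 * A * k) - (2 * A * k1)\<^sup>2) * (m * h1 - m1 * h)\<^sup>2 / E"
    unfolding christoffel_num_def bilinear_gram_identity ..
  finally have gram: "- christoffel_num A k k1 k2 h h1 m m1 / E * (christoffel_num A k k1 k2 m m1 h h1 / E) * E
      + christoffel_num A k k1 k2 m m1 m m1 / E * (christoffel_num A k k1 k2 h h1 h h1 / E) * E
      = (?\<alpha> * (2 * A * k) - (2 * A * k1)\<^sup>2) * (m * h1 - m1 * h)\<^sup>2 / E" .
  have "(A * k\<^sup>2 - 1) / 2 * (m * h1 - m1 * h)\<^sup>2
      + (?\<alpha> * (2 * A * k) - (2 * A * k1)\<^sup>2) * (m * h1 - m1 * h)\<^sup>2 / E
      = (- (A * k\<^sup>2 - 1)\<^sup>2 + 4 * A\<^sup>2 * k * k2 - 8 * A\<^sup>2 * k1\<^sup>2) / (2 * E) * (m * h1 - m1 * h)\<^sup>2"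
    using assms(2) unfolding E_def by (simp add: field_simps power2_eq_square power3_eq_cube)
  then show ?thesis
    using gram density_hessian_combination[of h m A k k1 h1 h2 m1 m2] by (simp add: algebra_simps)
qed

context closed_unit_speed_curve
begin

lemma Rm_zero_eq_integral:
  assumes A: "A \<ge> 0" and mC: "m \<in> Cinf L" and hC: "h \<in> Cinf L"
  shows "Rm c A L (\<lambda>_. 0) m h = integral {0..L} (\<lambda>t.
    (- (A * (curv c t)\<^sup>2 - 1)\<^sup>2 + 4 * A\<^sup>2 * curv c t * deriv (deriv (curv c)) t - 8 * A\<^sup>2 * (deriv (curv c) t)\<^sup>2)
      / (2 * (1 + A * (curv c t)\<^sup>2)) * (m t * deriv h t - deriv m t * h t)\<^sup>2
    + A * (m t * deriv (deriv h) t - deriv (deriv m) t * h t)\<^sup>2)"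
proof -
  have m: "smooth_fun m" and h: "smooth_fun h"
    using mC hC by (auto simp: Cinf_def)
  define H where "H = (\<lambda>a b t. density_hessian A (curv c t) (deriv (curv c) t) (a t) (deriv a t)
    (deriv (deriv a) t) (b t) (deriv b t) (deriv (deriv b) t))"
  have d2: "d2G c A L (\<lambda>_. 0) a b a' b' = integral {0..L} (\<lambda>t. a' t * b' t * H b a t)"
    if "smooth_fun a" "smooth_fun b" "smooth_fun a'" "smooth_fun b'" for a b a' b'
    unfolding H_def by (rule d2G_zero[OF that])
  have sH: "smooth_fun (H a b)" if "smooth_fun a" "smooth_fun b" for a b
    unfolding H_def density_hessian_def
    by (intro smooth_fun_const smooth_fun_add smooth_fun_diff smooth_fun_mult smooth_fun_power smooth_fun_deriv
        smooth_fun_curv that)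
  have s\<Gamma>: "smooth_fun (christoffel0 c A a b)" if "a \<in> Cinf L" "b \<in> Cinf L" for a b
    using christoffel0_Cinf[OF A that] by (simp add: Cinf_def)
  have sE: "smooth_fun (\<lambda>t. 1 + A * (curv c t)\<^sup>2)"
    by (intro smooth_fun_add smooth_fun_mult smooth_fun_const smooth_fun_power smooth_fun_curv)
  have G\<Gamma>: "Gm c A L (\<lambda>_. 0) (Chr c A L (\<lambda>_. 0) a b) (Chr c A L (\<lambda>_. 0) a' b') =
      integral {0..L} (\<lambda>t. christoffel0 c A a b t * christoffel0 c A a' b' t * (1 + A * (curv c t)\<^sup>2))"
    if "a \<in> Cinf L" "b \<in> Cinf L" "a' \<in> Cinf L" "b' \<in> Cinf L" for a b a' b'
    using that by (simp add: Chr_zero_eq[OF A] Gm_zero)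
  have "((\<lambda>t. - (h t * m t * H h m t) + 1/2 * (h t * h t * H m m t) + 1/2 * (m t * m t * H h h t)
      - christoffel0 c A h m t * christoffel0 c A m h t * (1 + A * (curv c t)\<^sup>2)
      + christoffel0 c A m m t * christoffel0 c A h h t * (1 + A * (curv c t)\<^sup>2))
      has_integral Rm c A L (\<lambda>_. 0) m h) {0..L}"
    unfolding Rm_def d2[OF m h h m] d2[OF m m h h] d2[OF h h m m] G\<Gamma>[OF hC mC mC hC] G\<Gamma>[OF mC mC hC hC]
    by (intro has_integral_add has_integral_diff has_integral_neg has_integral_mult_right smooth_fun_has_integral;
        intro smooth_fun_mult sH s\<Gamma> sE m h mC hC)
  moreover have "- (h t * m t * H h m t) + 1/2 * (h t * h t * H m m t) + 1/2 * (m t * m t * H h h t)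
      - christoffel0 c A h m t * christoffel0 c A m h t * (1 + A * (curv c t)\<^sup>2)
      + christoffel0 c A m m t * christoffel0 c A h h t * (1 + A * (curv c t)\<^sup>2)
      = (- (A * (curv c t)\<^sup>2 - 1)\<^sup>2 + 4 * A\<^sup>2 * curv c t * deriv (deriv (curv c)) t
          - 8 * A\<^sup>2 * (deriv (curv c) t)\<^sup>2) / (2 * (1 + A * (curv c t)\<^sup>2)) * (m t * deriv h t - deriv m t * h t)\<^sup>2
        + A * (m t * deriv (deriv h) t - deriv (deriv m) t * h t)\<^sup>2" for t
    unfolding H_def christoffel0_def
    by (rule curvature_integrand_identity) (use one_plus_nonneg_square_pos[OF A, of "curv c t"] in simp)
  ultimately show ?thesis
    by (simp add: integral_unique)
qed

lemma Rm_zero: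
  assumes A: "A \<ge> 0" and "m \<in> Cinf L" "h \<in> Cinf L"
  defines "W \<equiv> \<lambda>t. m t * deriv h t - deriv m t * h t"
  shows "Rm c A L (\<lambda>_. 0) m h =
    integral {0..L} (\<lambda>t. (- (A * (curv c t)\<^sup>2 - 1)\<^sup>2 + 4 * A\<^sup>2 * curv c t * deriv (deriv (curv c)) t
        - 8 * A\<^sup>2 * (deriv (curv c) t)\<^sup>2) / (2 * (1 + A * (curv c t)\<^sup>2)) * (W t)\<^sup>2)
    + integral {0..L} (\<lambda>t. A * (deriv W t)\<^sup>2)"
proof -
  have m: "smooth_fun m" and h: "smooth_fun h"
    using assms by (auto simp: Cinf_def)
  have "\<forall>t. 2 * (1 + A * (curv c t)\<^sup>2) \<noteq> 0"
    using one_plus_nonneg_square_pos[OF A] by (metis less_numeral_extra(3) mult_pos_pos zero_less_numeral)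
  then show ?thesis
    unfolding Rm_zero_eq_integral[OF assms(1-3)] W_def deriv_wronskian[OF m h]
    by (intro integral_add smooth_fun_integrable; intro smooth_fun_divide smooth_fun_add smooth_fun_diff
        smooth_fun_mult smooth_fun_const smooth_fun_power smooth_fun_minus smooth_fun_deriv smooth_fun_curv m h)
qed

lemma Rm_zero_flat:
  assumes "m \<in> Cinf L" "h \<in> Cinf L"
  shows "Rm c 0 L (\<lambda>_. 0) m h = - 1/2 * integral {0..L} (\<lambda>t. (m t * deriv h t - deriv m t * h t)\<^sup>2)"
  using Rm_zero[OF order_refl assms] by simp

lemma Rm_zero_flat_nonpos:
  assumes "m \<in> Cinf L" "h \<in> Cinf L"
  shows "Rm c 0 L (\<lambda>_. 0) m h \<le> 0"
proof -
  have "smooth_fun m" "smooth_fun h"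
    using assms by (auto simp: Cinf_def)
  then have "0 \<le> integral {0..L} (\<lambda>t. (m t * deriv h t - deriv m t * h t)\<^sup>2)"
    by (intro integral_nonneg) (auto intro!: smooth_fun_integrable smooth_fun_power smooth_fun_diff
        smooth_fun_mult smooth_fun_deriv)
  then show ?thesis
    unfolding Rm_zero_flat[OF assms] by simp
qed

lemma seccurv_zero_flat_nonneg:
  assumes "m \<in> Cinf L" "h \<in> Cinf L"
  shows "seccurv c 0 L (\<lambda>_. 0) m h \<ge> 0"
proof -
  have m: "smooth_fun m" and h: "smooth_fun h"
    using assms by (auto simp: Cinf_def)
  have "Rm c 0 L (\<lambda>_. 0) m h \<le> 0"
    using Rm_zero_flat_nonpos[OF assms] .
  moreover have "(Gm c 0 L (\<lambda>_. 0) m h)\<^sup>2 \<le> Gm c 0 L (\<lambda>_. 0) m m * Gm c 0 L (\<lambda>_. 0) h h"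
    unfolding Gm_zero using Cauchy_Schwarz_integral[OF m h] by simp
  ultimately show ?thesis
    unfolding seccurv_def by (intro divide_nonneg_nonneg) auto
qed

end

theorem mainTheorem18:
  fixes L A :: real and c :: "real \<Rightarrow> complex"
  defines "\<kappa> \<equiv> curv c"
  assumes "L > 0" and "A \<ge> 0"
    and "smooth_curve c" and "L_periodic L c"
    and "\<forall>t. cmod (vderiv c t) = 1"
  shows
    "(\<forall>h\<in>Cinf L. \<forall>k\<in>Cinf L. Chr c A L (\<lambda>_. 0) h k =
        (\<lambda>t. ((1/2 * \<kappa> t - 1/2 * A * (\<kappa> t)^3 + A * deriv (deriv \<kappa>) t) * h t * k t
               + 2 * A * deriv \<kappa> t * (deriv h t * k t + h t * deriv k t)
               + 2 * A * \<kappa> t * deriv h t * deriv k t) / (1 + A * (\<kappa> t)\<^sup>2)))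
   \<and> (\<forall>m\<in>Cinf L. \<forall>h\<in>Cinf L.
        let W = (\<lambda>t. m t * deriv h t - deriv m t * h t) in
        Rm c A L (\<lambda>_. 0) m h =
          integral {0..L} (\<lambda>t. (- (A * (\<kappa> t)\<^sup>2 - 1)\<^sup>2 + 4 * A\<^sup>2 * \<kappa> t * deriv (deriv \<kappa>) t
                                 - 8 * A\<^sup>2 * (deriv \<kappa> t)\<^sup>2) / (2 * (1 + A * (\<kappa> t)\<^sup>2)) * (W t)\<^sup>2)
          + integral {0..L} (\<lambda>t. A * (deriv W t)\<^sup>2))
   \<and> (A = 0 \<longrightarrow>
        (\<forall>h\<in>Cinf L. \<forall>k\<in>Cinf L. Chr c A L (\<lambda>_. 0) h k = (\<lambda>t. 1/2 * \<kappa> t * h t * k t))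
      \<and> (\<forall>m\<in>Cinf L. \<forall>h\<in>Cinf L.
           let W = (\<lambda>t. m t * deriv h t - deriv m t * h t) in
           Rm c A L (\<lambda>_. 0) m h = - 1/2 * integral {0..L} (\<lambda>t. (W t)\<^sup>2)
           \<and> Rm c A L (\<lambda>_. 0) m h \<le> 0
           \<and> seccurv c A L (\<lambda>_. 0) m h \<ge> 0))"
proof -
  interpret closed_unit_speed_curve c L
    using assms by unfold_locales auto
  show ?thesis
    unfolding \<kappa>_def Let_def
    using Chr_zero_eq[OF \<open>A \<ge> 0\<close>] Rm_zero[OF \<open>A \<ge> 0\<close>] Rm_zero_flat Rm_zero_flat_nonpos
      seccurv_zero_flat_nonneg
    by (auto simp: christoffel0_def christoffel_num_def)
qed

end
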